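(* For any $r,m\in\mathbb{N}$ and $\varepsilon,\delta>0$ there is $D\in\mathbb{N}$ such that for any $n\ge D$ and any $\mathcal{F}\subset[m]^n$ there is $T\subset[n]$ with $|T|\le D$ such that $\Pr_{\mathbf{a}\in[m]^T}\big[\mathcal{F}_{T\to\mathbf{a}}\text{ is not }(r,\varepsilon)\text{-pseudorandom}\big]\le\delta$, where $\mathbf{a}$ is uniform in $[m]^T$.
   Context: $\mu$ denotes the uniform probability measure on the relevant product space $[m]^{I}$. For $R\subset[n]$ and $a\in[m]^R$, the restriction is $\mathcal{F}_{R\to a}=\{x\in[m]^{[n]\setminus R}: (x_R=a,x_{[n]\setminus R}=x)\in\mathcal{F}\}\subset[m]^{[n]\setminus R}$. A family $\mathcal{G}\subset[m]^{I}$ is $(r,\varepsilon)$-pseudorandom if for every $R\subset I$ with $|R|\le r$ and every $a\in[m]^R$ we have $|\mu(\mathcal{G}_{R\to a})-\mu(\mathcal{G})|\le\varepsilon$. *)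

theory Defs
  imports "HOL-Library.FuncSet" Complex_Main
begin

text \<open>[m] is rendered as {..<m}; [m]^I as the extensional function space I \<rightarrow>E {..<m}.\<close>

definition cube :: "nat \<Rightarrow> 'i set \<Rightarrow> ('i \<Rightarrow> nat) set" where
  "cube m I = PiE I (\<lambda>_. {..<m})"

definition mu :: "nat \<Rightarrow> 'i set \<Rightarrow> ('i \<Rightarrow> nat) set \<Rightarrow> real" where
  "mu m I G = real (card (G \<inter> cube m I)) / real (card (cube m I))"

definition restr :: "nat \<Rightarrow> 'i set \<Rightarrow> ('i \<Rightarrow> nat) set \<Rightarrow> 'i set \<Rightarrow> ('i \<Rightarrow> nat) \<Rightarrow> ('i \<Rightarrow> nat) set" where
  "restr m I F R a = {x \<in> cube m (I - R). (\<lambda>i. if i \<in> R then a i else x i) \<in> F}"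

definition pseudorandom :: "nat \<Rightarrow> 'i set \<Rightarrow> nat \<Rightarrow> real \<Rightarrow> ('i \<Rightarrow> nat) set \<Rightarrow> bool" where
  "pseudorandom m I r \<epsilon> G \<longleftrightarrow>
     (\<forall>R. R \<subseteq> I \<and> card R \<le> r \<longrightarrow>
        (\<forall>a \<in> cube m R. \<bar>mu m (I - R) (restr m I G R a) - mu m I G\<bar> \<le> \<epsilon>))"

end

theory Submission
  imports Defs
begin

text \<open>Energy increment. For T \<subseteq> [n] let the energy of T be the mean square of the density of
  F on the fibers {y. y|T = a}, a number in [0, 1]. Refining T to T' \<supseteq> T raises the energy by
  the mean square of the change of density (Pythagoras). If a \<delta>-fraction of the restrictions
  F_{T\<rightarrow>a} is not (r, \<epsilon>)-pseudorandom, each such a has a witness R_a of size at most r on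
  which the density deviates by more than \<epsilon>; this deviation lives on a sub-fiber of relative
  size at least m^-r, so adding all R_a to T raises the energy by at least \<delta>\<epsilon>^2/m^r while
  |T| grows to at most |T| + r m^|T|. Hence after fewer than m^r/(\<delta>\<epsilon>^2) steps the bad
  fraction is at most \<delta>.\<close>

lemma finite_cube: "finite I \<Longrightarrow> finite (cube m I)"
  by (simp add: cube_def finite_PiE)

lemma card_cube: "finite I \<Longrightarrow> card (cube m I) = m ^ card I"
  by (simp add: cube_def card_PiE)

lemma cube_memD: "x \<in> cube m I \<Longrightarrow> J \<subseteq> I \<Longrightarrow> \<forall>i\<in>J. x i < m"
  by (auto simp: cube_def PiE_iff)

lemma pseudorandom_empty_alphabet:
  assumes "\<epsilon> \<ge> 0"
  shows "pseudorandom 0 I r \<epsilon> G"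
  unfolding pseudorandom_def
proof (intro allI impI ballI)
  fix R and a :: "'a \<Rightarrow> nat"
  assume "a \<in> cube 0 R"
  then have "R = {}" by (auto simp: cube_def)
  moreover have "restr 0 I G {} a = G \<inter> cube 0 I" by (auto simp: restr_def)
  ultimately show "\<bar>mu 0 (I - R) (restr 0 I G R a) - mu 0 I G\<bar> \<le> \<epsilon>"
    using assms by (simp add: mu_def Int_assoc)
qed

lemma restr_restr:
  assumes "R \<subseteq> I - T" "\<forall>i\<in>R. b i < m"
  shows "restr m (I - T) (restr m I F T a) R b
           = restr m I F (T \<union> R) (\<lambda>i. if i \<in> T then a i else b i)"
proof -
  have "I - T - R = I - (T \<union> R)" by auto
  moreover have "(\<lambda>i. if i \<in> T then a i else if i \<in> R then b i else x i)
      = (\<lambda>i. if i \<in> T \<union> R then (if i \<in> T then a i else b i) else x i)" for x :: "'a \<Rightarrow> nat"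
    by auto
  ultimately show ?thesis
    using assms by (auto simp: restr_def cube_def PiE_iff extensional_def)
qed

locale cube_family =
  fixes m :: nat and N :: "'i set" and F :: "('i \<Rightarrow> nat) set"
  assumes finite_N: "finite N" and F_subset: "F \<subseteq> cube m N" and m_pos: "0 < m"
begin

definition fiber :: "'i set \<Rightarrow> ('i \<Rightarrow> nat) \<Rightarrow> ('i \<Rightarrow> nat) set" where
  "fiber S x = {y \<in> cube m N. \<forall>i\<in>S. y i = x i}"

definition density :: "'i set \<Rightarrow> ('i \<Rightarrow> nat) \<Rightarrow> real" where
  "density S x = real (card (F \<inter> fiber S x)) / real m ^ card (N - S)"

definition energy :: "'i set \<Rightarrow> real" where
  "energy S = (\<Sum>y\<in>cube m N. (density S y)\<^sup>2) / real m ^ card N"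

definition bad_restrictions :: "nat \<Rightarrow> real \<Rightarrow> 'i set \<Rightarrow> ('i \<Rightarrow> nat) set" where
  "bad_restrictions r \<epsilon> T = {a \<in> cube m T. \<not> pseudorandom m (N - T) r \<epsilon> (restr m N F T a)}"

lemma finite_fiber: "finite (fiber S x)"
  using finite_cube[OF finite_N] by (simp add: fiber_def)

lemma fiber_subset_cube: "fiber S x \<subseteq> cube m N"
  by (auto simp: fiber_def)

lemma card_fiber:
  assumes "S \<subseteq> N" "\<forall>i\<in>S. x i < m"
  shows "card (fiber S x) = m ^ card (N - S)"
proof -
  have "fiber S x = PiE N (\<lambda>i. if i \<in> S then {x i} else {..<m})"
    using assms by (auto simp: fiber_def cube_def PiE_iff extensional_def split: if_splits)
  then have "card (fiber S x) = (\<Prod>i\<in>N. if i \<in> S then 1 else m)"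
    using finite_N by (simp add: card_PiE if_distrib cong: if_cong)
  also have "\<dots> = m ^ card (N - S)"
    using finite_N by (simp add: prod.If_cases Diff_eq)
  finally show ?thesis .
qed

lemma fiber_cong: "\<forall>i\<in>S. x i = y i \<Longrightarrow> fiber S x = fiber S y"
  by (auto simp: fiber_def)

lemma density_cong: "\<forall>i\<in>S. x i = y i \<Longrightarrow> density S x = density S y"
  by (drule fiber_cong) (simp add: density_def)

lemma card_F_fiber: "real (card (F \<inter> fiber S x)) = (\<Sum>z\<in>fiber S x. of_bool (z \<in> F))"
  using finite_fiber by (simp add: Int_commute)

text \<open>Double counting: each z in the S-fiber of x lies in the S'-fiber of exactly
  m^|N - S'| points y of that fiber.\<close>
lemma sum_fiber_fiber:
  assumes "S \<subseteq> S'" "S' \<subseteq> N"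
  shows "(\<Sum>y\<in>fiber S x. \<Sum>z\<in>fiber S' y. h z) = real m ^ card (N - S') * (\<Sum>z\<in>fiber S x. h z)"
proof -
  let ?agree = "\<lambda>y z. \<forall>i\<in>S'. z i = y i"
  have "fiber S' y = {z \<in> fiber S x. ?agree y z}" if "y \<in> fiber S x" for y
    using that assms by (auto simp: fiber_def)
  then have "(\<Sum>y\<in>fiber S x. \<Sum>z\<in>fiber S' y. h z)
      = (\<Sum>y\<in>fiber S x. \<Sum>z\<in>{z \<in> fiber S x. ?agree y z}. h z)"
    by (intro sum.cong) auto
  also have "\<dots> = (\<Sum>z\<in>fiber S x. \<Sum>y\<in>{y \<in> fiber S x. ?agree y z}. h z)"
    by (rule sum.swap_restrict[OF finite_fiber finite_fiber])
  also have "\<dots> = (\<Sum>z\<in>fiber S x. real (card (fiber S' z)) * h z)"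
  proof (intro sum.cong refl)
    fix z assume "z \<in> fiber S x"
    then have "{y \<in> fiber S x. ?agree y z} = fiber S' z"
      using assms by (auto simp: fiber_def)
    then show "(\<Sum>y\<in>{y \<in> fiber S x. ?agree y z}. h z) = real (card (fiber S' z)) * h z"
      by simp
  qed
  also have "\<dots> = (\<Sum>z\<in>fiber S x. real m ^ card (N - S') * h z)"
    using assms by (intro sum.cong refl)
      (simp add: card_fiber cube_memD[OF subsetD[OF fiber_subset_cube]])
  finally show ?thesis
    by (simp add: sum_distrib_left)
qed

lemma sum_fiber_density:
  assumes "S \<subseteq> S'" "S' \<subseteq> N"
  shows "(\<Sum>y\<in>fiber S x. density S' y) = real (card (F \<inter> fiber S x))"
proof -
  have "(\<Sum>y\<in>fiber S x. density S' y)
      = (\<Sum>y\<in>fiber S x. \<Sum>z\<in>fiber S' y. of_bool (z \<in> F)) / real m ^ card (N - S')"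
    by (simp add: density_def card_F_fiber sum_divide_distrib)
  also have "\<dots> = real (card (F \<inter> fiber S x))"
    using m_pos by (simp add: sum_fiber_fiber[OF assms] card_F_fiber)
  finally show ?thesis .
qed

lemma fiber_pythagoras:
  assumes "S \<subseteq> S'" "S' \<subseteq> N" "\<forall>i\<in>S. x i < m"
  shows "(\<Sum>y\<in>fiber S x. (density S' y - density S y)\<^sup>2)
           = (\<Sum>y\<in>fiber S x. (density S' y)\<^sup>2) - (\<Sum>y\<in>fiber S x. (density S y)\<^sup>2)"
proof -
  define C where "C = fiber S x"
  define c where "c = density S x"
  have density_C: "density S y = c" if "y \<in> C" for y
    using that unfolding C_def c_def fiber_def by (intro density_cong) auto
  have card_C: "real (card C) * c = real (card (F \<inter> C))"
    using card_fiber[of S x] assms m_pos by (simp add: C_def c_def density_def)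
  have sum_C: "(\<Sum>y\<in>C. density S' y) = real (card (F \<inter> C))"
    unfolding C_def using assms(1,2) by (rule sum_fiber_density)
  have "(\<Sum>y\<in>C. (density S' y - density S y)\<^sup>2) = (\<Sum>y\<in>C. (density S' y)\<^sup>2 - 2 * c * density S' y + c\<^sup>2)"
    by (intro sum.cong refl) (simp add: density_C power2_diff)
  also have "\<dots> = (\<Sum>y\<in>C. (density S' y)\<^sup>2) - 2 * c * (\<Sum>y\<in>C. density S' y) + real (card C) * c\<^sup>2"
    by (simp add: sum.distrib sum_subtractf sum_distrib_left)
  also have "\<dots> = (\<Sum>y\<in>C. (density S' y)\<^sup>2) - real (card C) * c\<^sup>2"
    using sum_C card_C by (simp add: power2_eq_square algebra_simps)
  also have "\<dots> = (\<Sum>y\<in>C. (density S' y)\<^sup>2) - (\<Sum>y\<in>C. (density S y)\<^sup>2)"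
    by (simp add: density_C)
  finally show ?thesis unfolding C_def .
qed

lemma fiber_sum_sq_density_mono:
  assumes "S \<subseteq> S'" "S' \<subseteq> S''" "S'' \<subseteq> N"
  shows "(\<Sum>y\<in>fiber S x. (density S' y)\<^sup>2) \<le> (\<Sum>y\<in>fiber S x. (density S'' y)\<^sup>2)"
proof -
  let ?gain = "\<lambda>z. (density S'' z)\<^sup>2 - (density S' z)\<^sup>2"
  have "0 \<le> (\<Sum>z\<in>fiber S' y. ?gain z)" if "y \<in> fiber S x" for y
  proof -
    have "\<forall>i\<in>S'. y i < m"
      using that assms by (intro cube_memD[OF subsetD[OF fiber_subset_cube]]) auto
    then have "(\<Sum>z\<in>fiber S' y. ?gain z) = (\<Sum>z\<in>fiber S' y. (density S'' z - density S' z)\<^sup>2)"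
      using assms by (simp add: fiber_pythagoras sum_subtractf)
    then show ?thesis by (simp add: sum_nonneg)
  qed
  then have "0 \<le> (\<Sum>y\<in>fiber S x. \<Sum>z\<in>fiber S' y. ?gain z)"
    by (rule sum_nonneg)
  also have "\<dots> = real m ^ card (N - S') * (\<Sum>z\<in>fiber S x. ?gain z)"
    using assms by (intro sum_fiber_fiber) auto
  finally have "0 \<le> (\<Sum>z\<in>fiber S x. ?gain z)"
    using m_pos by (simp add: zero_le_mult_iff power_le_zero_eq)
  then show ?thesis by (simp add: sum_subtractf)
qed

lemma fiber_variance_mono:
  assumes "S \<subseteq> S'" "S' \<subseteq> S''" "S'' \<subseteq> N" "\<forall>i\<in>S. x i < m"
  shows "(\<Sum>y\<in>fiber S x. (density S' y - density S y)\<^sup>2) \<le> (\<Sum>y\<in>fiber S x. (density S'' y - density S y)\<^sup>2)"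
  using assms fiber_sum_sq_density_mono[OF assms(1-3)]
  by (simp add: fiber_pythagoras)

lemma sum_cube_eq_sum_fibers:
  assumes "T \<subseteq> N"
  shows "(\<Sum>y\<in>cube m N. g y) = (\<Sum>a\<in>cube m T. \<Sum>y\<in>fiber T a. g y)"
proof -
  have "finite (cube m T)"
    using assms finite_N by (intro finite_cube) (rule finite_subset)
  moreover have "(\<lambda>y. restrict y T) ` cube m N \<subseteq> cube m T"
    using assms by (auto simp: cube_def PiE_iff)
  ultimately have "(\<Sum>y\<in>cube m N. g y) = (\<Sum>a\<in>cube m T. \<Sum>y\<in>{y \<in> cube m N. restrict y T = a}. g y)"
    using finite_cube[OF finite_N] by (simp add: sum.group)
  also have "\<dots> = (\<Sum>a\<in>cube m T. \<Sum>y\<in>fiber T a. g y)"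
    by (intro sum.cong refl arg_cong2[where f=sum])
      (auto simp: fiber_def cube_def PiE_iff extensional_def fun_eq_iff)
  finally show ?thesis .
qed

lemma density_bounds:
  assumes "S \<subseteq> N" "y \<in> cube m N"
  shows "0 \<le> density S y" "density S y \<le> 1"
proof -
  show "0 \<le> density S y" by (simp add: density_def)
  have "card (F \<inter> fiber S y) \<le> card (fiber S y)"
    by (intro card_mono finite_fiber) auto
  also have "\<dots> = m ^ card (N - S)"
    using assms by (intro card_fiber cube_memD)
  finally show "density S y \<le> 1"
    using m_pos by (simp add: density_def divide_le_eq_1 flip: of_nat_le_iff)
qed

lemma energy_bounds:
  assumes "S \<subseteq> N"
  shows "0 \<le> energy S" "energy S \<le> 1"
proof -
  show "0 \<le> energy S" by (simp add: energy_def sum_nonneg)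
  have "(\<Sum>y\<in>cube m N. (density S y)\<^sup>2) \<le> (\<Sum>y\<in>cube m N. 1)"
    using density_bounds[OF assms] by (intro sum_mono) (simp add: power_le_one)
  then show "energy S \<le> 1"
    using finite_N m_pos by (simp add: energy_def card_cube divide_le_eq_1)
qed

lemma mu_restr_eq_density: "mu m (N - T) (restr m N F T a) = density T a"
proof -
  let ?extend = "\<lambda>x i. if i \<in> T then a i else x i"
  have "bij_betw ?extend (restr m N F T a) (F \<inter> fiber T a)"
  proof (rule bij_betw_byWitness[where f'="\<lambda>y. restrict y (N - T)"])
    show "\<forall>x\<in>restr m N F T a. restrict (?extend x) (N - T) = x"
      by (auto simp: restr_def cube_def PiE_iff extensional_def fun_eq_iff)
    show "\<forall>y\<in>F \<inter> fiber T a. ?extend (restrict y (N - T)) = y"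
      by (auto simp: fiber_def cube_def PiE_iff extensional_def fun_eq_iff)
    then show "(\<lambda>y. restrict y (N - T)) ` (F \<inter> fiber T a) \<subseteq> restr m N F T a"
      by (force simp: restr_def fiber_def cube_def PiE_iff)
    show "?extend ` restr m N F T a \<subseteq> F \<inter> fiber T a"
      using F_subset by (auto simp: restr_def fiber_def)
  qed
  then have "card (restr m N F T a) = card (F \<inter> fiber T a)"
    by (rule bij_betw_same_card)
  moreover have "restr m N F T a \<inter> cube m (N - T) = restr m N F T a"
    by (auto simp: restr_def)
  ultimately show ?thesis
    using finite_N by (simp add: mu_def density_def card_cube)
qed

lemma pseudorandom_restr_iff:
  "pseudorandom m (N - T) r \<epsilon> (restr m N F T a) \<longleftrightarrow>
     (\<forall>R. R \<subseteq> N - T \<and> card R \<le> r \<longrightarrow>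
        (\<forall>b\<in>cube m R. \<bar>density (T \<union> R) (\<lambda>i. if i \<in> T then a i else b i) - density T a\<bar> \<le> \<epsilon>))"
proof -
  have "mu m (N - T - R) (restr m (N - T) (restr m N F T a) R b)
          = density (T \<union> R) (\<lambda>i. if i \<in> T then a i else b i)"
    if "R \<subseteq> N - T" "b \<in> cube m R" for R b
  proof -
    have "restr m (N - T) (restr m N F T a) R b = restr m N F (T \<union> R) (\<lambda>i. if i \<in> T then a i else b i)"
      using that by (intro restr_restr cube_memD[OF that(2)]) auto
    moreover have "N - T - R = N - (T \<union> R)" by auto
    ultimately show ?thesis
      by (simp add: mu_restr_eq_density)
  qed
  then show ?thesis
    unfolding pseudorandom_def mu_restr_eq_density by auto
qed

lemma deviation_energy_gain:
  assumes "T \<union> R \<subseteq> T'" "T' \<subseteq> N" "card R \<le> r" "\<forall>i\<in>T. a i < m" "b \<in> cube m R"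
    and "0 \<le> \<epsilon>" "\<epsilon> \<le> \<bar>density (T \<union> R) (\<lambda>i. if i \<in> T then a i else b i) - density T a\<bar>"
  shows "\<epsilon>\<^sup>2 * real m ^ card (N - T) / real m ^ r
           \<le> (\<Sum>y\<in>fiber T a. (density T' y - density T y)\<^sup>2)"
proof -
  define c where "c = (\<lambda>i. if i \<in> T then a i else b i)"
  define d where "d = density (T \<union> R) c - density T a"
  have TR_N: "T \<union> R \<subseteq> N" using assms(1,2) by auto
  have c_range: "\<forall>i\<in>T \<union> R. c i < m"
    using assms(4) cube_memD[OF assms(5)] by (auto simp: c_def)
  have d_fiber: "(density (T \<union> R) y - density T y)\<^sup>2 = d\<^sup>2" if "y \<in> fiber (T \<union> R) c" for y
  proof -
    have "density (T \<union> R) y = density (T \<union> R) c" "density T y = density T a"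
      using that by (auto intro!: density_cong simp: fiber_def c_def)
    then show ?thesis by (simp add: d_def)
  qed
  have "finite R"
    using TR_N finite_N by (blast intro: finite_subset)
  then have "card (N - T) \<le> card (N - (T \<union> R)) + card R"
    using finite_N by (intro order_trans[OF card_mono card_Un_le]) auto
  then have "real m ^ card (N - T) \<le> real m ^ card (N - (T \<union> R)) * real m ^ r"
    using m_pos assms(3) by (simp flip: power_add) (simp add: power_increasing)
  then have "\<epsilon>\<^sup>2 * real m ^ card (N - T) / real m ^ r \<le> \<epsilon>\<^sup>2 * real m ^ card (N - (T \<union> R))"
    using m_pos by (simp add: divide_le_eq mult_left_mono mult.assoc)
  also have "\<dots> \<le> d\<^sup>2 * real m ^ card (N - (T \<union> R))"
    using assms(6,7) by (intro mult_right_mono) (auto simp: d_def c_def abs_le_square_iff[symmetric])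
  also have "\<dots> = (\<Sum>y\<in>fiber (T \<union> R) c. (density (T \<union> R) y - density T y)\<^sup>2)"
    using card_fiber[OF TR_N c_range] by (simp add: d_fiber)
  also have "\<dots> \<le> (\<Sum>y\<in>fiber T a. (density (T \<union> R) y - density T y)\<^sup>2)"
    by (intro sum_mono2 finite_fiber) (auto simp: fiber_def c_def)
  also have "\<dots> \<le> (\<Sum>y\<in>fiber T a. (density T' y - density T y)\<^sup>2)"
    using assms by (intro fiber_variance_mono) auto
  finally show ?thesis .
qed

lemma energy_increment:
  assumes "T \<subseteq> T'" "T' \<subseteq> N"
  shows "energy T' - energy T
           = (\<Sum>a\<in>cube m T. \<Sum>y\<in>fiber T a. (density T' y - density T y)\<^sup>2) / real m ^ card N"
proof -
  have T_N: "T \<subseteq> N" using assms by auto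
  have "energy T' - energy T = (\<Sum>a\<in>cube m T.
      (\<Sum>y\<in>fiber T a. (density T' y)\<^sup>2) - (\<Sum>y\<in>fiber T a. (density T y)\<^sup>2)) / real m ^ card N"
    by (simp add: energy_def sum_cube_eq_sum_fibers[OF T_N] diff_divide_distrib sum_subtractf)
  also have "\<dots> = (\<Sum>a\<in>cube m T. \<Sum>y\<in>fiber T a. (density T' y - density T y)\<^sup>2) / real m ^ card N"
    by (rule arg_cong[where f="\<lambda>s. s / real m ^ card N"], rule sum.cong[OF refl],
        rule fiber_pythagoras[symmetric]) (use assms in \<open>auto simp: cube_def PiE_iff\<close>)
  finally show ?thesis .
qed

lemma energy_step:
  assumes T_N: "T \<subseteq> N" and "0 \<le> \<epsilon>" and bad: "\<delta> < mu m T (bad_restrictions r \<epsilon> T)"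
  shows "\<exists>T' \<subseteq> N. card T' \<le> card T + r * m ^ card T \<and> energy T + \<delta> * \<epsilon>\<^sup>2 / real m ^ r \<le> energy T'"
proof -
  define B where "B = bad_restrictions r \<epsilon> T"
  have finite_T: "finite T" using T_N finite_N by (rule finite_subset)
  have B_cube: "B \<subseteq> cube m T" by (auto simp: B_def bad_restrictions_def)
  have finite_B: "finite B" using B_cube finite_cube[OF finite_T] by (rule finite_subset)
  have "\<exists>R b. R \<subseteq> N - T \<and> card R \<le> r \<and> b \<in> cube m R \<and>
          \<epsilon> < \<bar>density (T \<union> R) (\<lambda>i. if i \<in> T then a i else b i) - density T a\<bar>" if "a \<in> B" for a
    using that by (auto simp: B_def bad_restrictions_def pseudorandom_restr_iff not_le)
  then obtain R b where witness: "\<And>a. a \<in> B \<Longrightarrow> R a \<subseteq> N - T \<and> card (R a) \<le> r \<and> b a \<in> cube m (R a) \<and>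
      \<epsilon> < \<bar>density (T \<union> R a) (\<lambda>i. if i \<in> T then a i else b a i) - density T a\<bar>"
    by metis
  define T' where "T' = T \<union> (\<Union>a\<in>B. R a)"
  have T'_N: "T' \<subseteq> N" using T_N witness by (auto simp: T'_def)
  have "card T' \<le> card T + (\<Sum>a\<in>B. card (R a))"
    unfolding T'_def by (rule order_trans[OF card_Un_le]) (simp add: card_UN_le[OF finite_B])
  also have "\<dots> \<le> card T + card B * r"
    using witness sum_mono[of B "\<lambda>a. card (R a)" "\<lambda>_. r"] by simp
  also have "\<dots> \<le> card T + r * m ^ card T"
    using card_mono[OF finite_cube[OF finite_T] B_cube] by (simp add: card_cube[OF finite_T])
  finally have card_T': "card T' \<le> card T + r * m ^ card T" .
  have mu_B: "mu m T B = real (card B) / real m ^ card T"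
    using B_cube by (simp add: mu_def card_cube[OF finite_T] Int_absorb2)
  have card_N: "card N = card T + card (N - T)"
    using card_Diff_subset[OF finite_T T_N] card_mono[OF finite_N T_N] by simp
  have "\<delta> * \<epsilon>\<^sup>2 / real m ^ r \<le> mu m T B * \<epsilon>\<^sup>2 / real m ^ r"
    using bad by (intro divide_right_mono mult_right_mono) (auto simp: B_def)
  also have "\<dots> = (\<Sum>a\<in>B. \<epsilon>\<^sup>2 * real m ^ card (N - T) / real m ^ r) / real m ^ card N"
    using m_pos by (simp add: mu_B card_N power_add field_simps)
  also have "\<dots> \<le> (\<Sum>a\<in>B. \<Sum>y\<in>fiber T a. (density T' y - density T y)\<^sup>2) / real m ^ card N"
  proof (intro divide_right_mono sum_mono)
    fix a assume "a \<in> B"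
    with witness[OF this] B_cube T'_N assms(2) show "\<epsilon>\<^sup>2 * real m ^ card (N - T) / real m ^ r
        \<le> (\<Sum>y\<in>fiber T a. (density T' y - density T y)\<^sup>2)"
      by (intro deviation_energy_gain[where R="R a" and b="b a"])
        (auto simp: T'_def cube_def PiE_iff)
  qed simp
  also have "\<dots> \<le> (\<Sum>a\<in>cube m T. \<Sum>y\<in>fiber T a. (density T' y - density T y)\<^sup>2) / real m ^ card N"
    by (intro divide_right_mono sum_mono2 finite_cube finite_T B_cube) (auto intro: sum_nonneg)
  also have "\<dots> = energy T' - energy T"
    using T'_N by (simp add: energy_increment T'_def)
  finally show ?thesis
    using T'_N card_T' by (intro exI[of _ T']) auto
qed

lemma energy_iteration:
  assumes "0 \<le> \<epsilon>"
  shows "\<exists>T \<subseteq> N. card T \<le> ((\<lambda>k. k + r * m ^ k) ^^ j) 0 \<and>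
           (mu m T (bad_restrictions r \<epsilon> T) \<le> \<delta> \<or> real j * (\<delta> * \<epsilon>\<^sup>2 / real m ^ r) \<le> energy T)"
proof (induction j)
  case 0
  show ?case by (intro exI[of _ "{}"]) (simp add: energy_bounds)
next
  case (Suc j)
  define g where "g = (\<lambda>k::nat. k + r * m ^ k)"
  have g_mono: "mono g"
    unfolding g_def using m_pos by (intro monoI add_mono mult_left_mono power_increasing) auto
  from Suc.IH obtain T where T_N: "T \<subseteq> N" and card_T: "card T \<le> (g ^^ j) 0"
    and alternative: "mu m T (bad_restrictions r \<epsilon> T) \<le> \<delta> \<or> real j * (\<delta> * \<epsilon>\<^sup>2 / real m ^ r) \<le> energy T"
    unfolding g_def by blast
  show ?case
  proof (cases "mu m T (bad_restrictions r \<epsilon> T) \<le> \<delta>")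
    case True
    have "card T \<le> g ((g ^^ j) 0)" using card_T by (simp add: g_def)
    then show ?thesis using T_N True unfolding g_def by auto
  next
    case False
    then obtain T' where T'_N: "T' \<subseteq> N" and card_T': "card T' \<le> g (card T)"
      and step: "energy T + \<delta> * \<epsilon>\<^sup>2 / real m ^ r \<le> energy T'"
      using energy_step[OF T_N assms, where \<delta>=\<delta> and r=r] False unfolding g_def by (auto simp: not_le)
    have "card T' \<le> (g ^^ Suc j) 0"
      using card_T' monoD[OF g_mono card_T] by simp
    moreover have "real (Suc j) * (\<delta> * \<epsilon>\<^sup>2 / real m ^ r) \<le> energy T'"
      using alternative False step unfolding of_nat_Suc distrib_right mult_1_left by linarith
    ultimately show ?thesis using T'_N unfolding g_def by auto
  qed
qed

end

theorem lemma3p2: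
  fixes r m :: nat and \<epsilon> \<delta> :: real
  assumes "\<epsilon> > 0" and "\<delta> > 0"
  shows "\<exists>D::nat. \<forall>n \<ge> D. \<forall>F \<subseteq> cube m {..<n}.
           \<exists>T \<subseteq> {..<n}. card T \<le> D \<and>
             mu m T {a \<in> cube m T.
                \<not> pseudorandom m ({..<n} - T) r \<epsilon> (restr m {..<n} F T a)} \<le> \<delta>"
proof (cases "m = 0")
  case True
  then show ?thesis
    using assms by (intro exI[of _ 0] allI impI exI[of _ "{}"]) (simp add: pseudorandom_empty_alphabet mu_def)
next
  case False
  define c where "c = \<delta> * \<epsilon>\<^sup>2 / real m ^ r"
  have "0 < c" using assms False by (simp add: c_def)
  then obtain K where K: "1 < real K * c"
    using ex_less_of_nat_mult by blast
  show ?thesis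
  proof (intro exI[of _ "((\<lambda>k. k + r * m ^ k) ^^ K) 0"] allI impI)
    fix n :: nat and F assume "F \<subseteq> cube m {..<n}"
    then interpret cube_family m "{..<n}" F
      using False by unfold_locales auto
    obtain T where "T \<subseteq> {..<n}" "card T \<le> ((\<lambda>k. k + r * m ^ k) ^^ K) 0"
      and "mu m T (bad_restrictions r \<epsilon> T) \<le> \<delta> \<or> real K * c \<le> energy T"
      using energy_iteration[OF less_imp_le[OF assms(1)], where r=r and j=K and \<delta>=\<delta>]
      unfolding c_def by auto
    moreover have "energy T \<le> 1" using energy_bounds \<open>T \<subseteq> {..<n}\<close> by blast
    ultimately show "\<exists>T \<subseteq> {..<n}. card T \<le> ((\<lambda>k. k + r * m ^ k) ^^ K) 0 \<and>
        mu m T {a \<in> cube m T. \<not> pseudorandom m ({..<n} - T) r \<epsilon> (restr m {..<n} F T a)} \<le> \<delta>"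
      using K by (auto simp: bad_restrictions_def)
  qed
qed

end
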